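(* Suppose $\Re s=1$, $u\ge1$, and $|s|>u$. For integers $\nu\ge0$, \[ \left|\frac{\partial^{\nu}}{\partial u^{\nu}}\left(s\frac{\partial}{\partial s}G(u,s)\right)\right|\ll_{\nu}\frac{|s|^{\nu}}{u^{2\nu}}, \] with implied constant depending only on $\nu$.
   Context: $G(u,s):=\int_{0}^{1/u}\frac{1-e^{-ts}}{t}\,dt$. *)

theory Defs
  imports "HOL-Analysis.Analysis"
begin

text \<open>G(u,s) = integral over [0, 1/u] of (1 - e^(-ts))/t dt, for real u > 0 and complex s.
  The integrand's value at t = 0 is irrelevant (null set).\<close>
definition G :: "real \<Rightarrow> complex \<Rightarrow> complex" where
  "G u s = integral {0..1/u} (\<lambda>t::real. (1 - exp (- (of_real t * s))) / of_real t)"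

definition nth_vderiv :: "nat \<Rightarrow> (real \<Rightarrow> complex) \<Rightarrow> real \<Rightarrow> complex" where
  "nth_vderiv n f = ((\<lambda>g x. vector_derivative g (at x)) ^^ n) f"

end

theory Submission
  imports Defs
begin

text \<open>Differentiating under the integral sign gives s dG/ds (u,s) = 1 - exp(-s/u).
  By induction, its n-th derivative in u is, for n > 0,
  -exp(-s/u) * (sum over k <= n of a(n,k) s^k / u^(n+k)) with integer coefficients a(n,k)
  independent of s and u. For Re s = 1 the exponential has modulus at most 1, and |s| >= u
  gives |s|^k / u^(n+k) <= |s|^n / u^(2n) for k <= n.\<close>

definition exp_quot :: "complex \<Rightarrow> complex" where
  "exp_quot w = (if w = 0 then 1 else (1 - exp (-w)) / w)"

lemma isCont_exp_quot: "isCont exp_quot w"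
proof (cases "w = 0")
  case True
  have "((\<lambda>w::complex. 1 - exp (-w)) has_field_derivative 1) (at 0)"
    by (rule derivative_eq_intros refl | simp)+
  then have "((\<lambda>y. (1 - exp (-y)) / y) \<longlongrightarrow> 1) (at (0::complex))"
    by (simp add: has_field_derivative_iff)
  moreover have "eventually (\<lambda>y. (1 - exp (-y)) / y = exp_quot y) (at (0::complex))"
    unfolding eventually_at_filter by (intro always_eventually) (simp add: exp_quot_def)
  ultimately have "(exp_quot \<longlongrightarrow> 1) (at 0)" by (rule Lim_transform_eventually)
  then show ?thesis using True by (simp add: isCont_def exp_quot_def)
next
  case False
  have "isCont (\<lambda>w. (1 - exp (-w)) / w) w"
    using False by (intro continuous_intros) auto
  moreover have "eventually (\<lambda>y. y \<noteq> 0) (nhds w)"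
    using False by (rule t1_space_nhds)
  then have "eventually (\<lambda>y. (1 - exp (-y)) / y = exp_quot y) (nhds w)"
    by eventually_elim (simp add: exp_quot_def)
  ultimately show ?thesis using isCont_cong by metis
qed

lemma G_eq_integral_exp_quot: "G v z = integral {0..1/v} (\<lambda>t. z * exp_quot (of_real t * z))"
  unfolding G_def
proof (rule integral_spike[of "{0}"])
  fix t assume "t \<in> {0..1/v} - {0}"
  then show "z * exp_quot (of_real t * z) = (1 - exp (- (of_real t * z))) / of_real t"
    by (cases "z = 0") (auto simp: exp_quot_def field_simps)
qed auto

lemma has_field_derivative_scaled_exp_quot:
  "((\<lambda>z. z * exp_quot (of_real t * z)) has_field_derivative exp (- (of_real t * z))) (at z)"
proof (cases "t = 0")
  case True
  then show ?thesis by (simp add: exp_quot_def)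
next
  case False
  have "(\<lambda>z. z * exp_quot (of_real t * z)) = (\<lambda>z. (1 - exp (- (of_real t * z))) / of_real t)"
    using False by (auto simp: exp_quot_def field_simps fun_eq_iff)
  moreover have "((\<lambda>z. (1 - exp (- (of_real t * z))) / of_real t)
      has_field_derivative exp (- (of_real t * z))) (at z)"
    by (rule derivative_eq_intros refl | simp add: False)+
  ultimately show ?thesis by simp
qed

lemma has_integral_exp_scaled:
  fixes s :: complex
  assumes "s \<noteq> 0" "b \<ge> 0"
  shows "((\<lambda>t. exp (- (of_real t * s))) has_integral (1 - exp (- (of_real b * s))) / s) {0..b}"
proof -
  have "((\<lambda>t. - exp (- (of_real t * s)) / s) has_vector_derivative exp (- (of_real t * s)))
      (at t within {0..b})" for t
  proof -
    have "((\<lambda>w. - exp (- (w * s)) / s) has_field_derivative exp (- (of_real t * s))) (at (of_real t))"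
      by (rule derivative_eq_intros refl | simp add: assms)+
    then show ?thesis by (rule has_vector_derivative_real_field)
  qed
  then have "((\<lambda>t. exp (- (of_real t * s))) has_integral
      (- exp (- (of_real b * s)) / s) - (- exp (- (of_real 0 * s)) / s)) {0..b}"
    using assms by (intro fundamental_theorem_of_calculus) auto
  then show ?thesis by (simp add: diff_divide_distrib)
qed

lemma deriv_G:
  assumes "s \<noteq> 0" "v > 0"
  shows "deriv (\<lambda>z. G v z) s = (1 - exp (- s / of_real v)) / s"
proof -
  define f where "f = (\<lambda>z (t::real). z * exp_quot (of_real t * z))"
  have "((\<lambda>z. integral (cbox 0 (1/v)) (f z)) has_field_derivative
        integral (cbox 0 (1/v)) (\<lambda>t. exp (- (of_real t * s)))) (at s within UNIV)"
  proof (rule leibniz_rule_field_derivative[where fx="\<lambda>z t. exp (- (of_real t * z))"])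
    fix z :: complex
    have "continuous_on {0..1/v} (f z)" unfolding f_def
      by (intro continuous_intros continuous_on_compose2[OF continuous_at_imp_continuous_on,
            of UNIV exp_quot]) (auto simp: isCont_exp_quot)
    then show "f z integrable_on cbox 0 (1/v)" by (simp add: integrable_continuous_interval)
  qed (auto simp: f_def case_prod_beta has_field_derivative_scaled_exp_quot intro!: continuous_intros)
  moreover have "(\<lambda>z. G v z) = (\<lambda>z. integral (cbox 0 (1/v)) (f z))"
    by (simp add: fun_eq_iff G_eq_integral_exp_quot f_def)
  moreover have "integral {0..1/v} (\<lambda>t. exp (- (of_real t * s))) = (1 - exp (- s / of_real v)) / s"
    using has_integral_exp_scaled[of s "1/v"] assms
    by (simp add: integral_unique field_simps)
  ultimately show ?thesis by (intro DERIV_imp_deriv) simp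
qed

text \<open>The recursion for a(n,k) comes from d/dw (exp(-s/w) s^k / w^(n+k))
  = exp(-s/w) (s^(k+1) / w^(n+k+2) - (n+k) s^k / w^(n+k+1)).\<close>
fun exp_recip_coeff :: "nat \<Rightarrow> nat \<Rightarrow> real" where
  "exp_recip_coeff 0 k = (if k = 0 then 1 else 0)"
| "exp_recip_coeff (Suc n) k =
     (if k = 0 then 0 else exp_recip_coeff n (k - 1)) - real (n + k) * exp_recip_coeff n k"

lemma exp_recip_coeff_eq_0: "n < k \<Longrightarrow> exp_recip_coeff n k = 0"
  by (induction n arbitrary: k) auto

definition exp_recip_poly :: "complex \<Rightarrow> nat \<Rightarrow> complex \<Rightarrow> complex" where
  "exp_recip_poly s n w = (\<Sum>k\<le>n. of_real (exp_recip_coeff n k) * s ^ k / w ^ (n + k))"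

definition one_minus_exp_recip_deriv :: "complex \<Rightarrow> nat \<Rightarrow> complex \<Rightarrow> complex" where
  "one_minus_exp_recip_deriv s n w = (if n = 0 then 1 else 0) - exp (- s / w) * exp_recip_poly s n w"

lemma has_field_derivative_divide_power:
  fixes w :: complex
  assumes "w \<noteq> 0"
  shows "((\<lambda>w. c / w ^ m) has_field_derivative (- of_nat m * c / w ^ (m + 1))) (at w)"
proof -
  have "((\<lambda>w. c / w ^ m) has_field_derivative (- (c * (of_nat m * w ^ (m - 1))) / (w ^ m * w ^ m))) (at w)"
    by (rule derivative_eq_intros refl | simp add: assms)+
  moreover have "- (c * (of_nat m * w ^ (m - 1))) / (w ^ m * w ^ m) = - of_nat m * c / w ^ (m + 1)"
    using assms by (cases m) (simp_all add: field_simps power_add)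
  ultimately show ?thesis by simp
qed

lemma exp_recip_poly_Suc:
  fixes s w :: complex
  assumes "w \<noteq> 0"
  shows "exp_recip_poly s (Suc n) w = s / w^2 * exp_recip_poly s n w
    + (\<Sum>k\<le>n. - of_nat (n + k) * (of_real (exp_recip_coeff n k) * s ^ k) / w ^ (n + k + 1))"
proof -
  let ?a = exp_recip_coeff
  have shifted: "(\<Sum>k\<le>Suc n. of_real (if k = 0 then 0 else ?a n (k - 1)) * s ^ k / w ^ (Suc n + k))
      = s / w^2 * exp_recip_poly s n w"
    unfolding exp_recip_poly_def sum_distrib_left sum.atMost_Suc_shift
    by (simp, intro sum.cong) (simp_all add: assms power2_eq_square field_simps)
  have scaled: "(\<Sum>k\<le>Suc n. of_real (real (n + k) * ?a n k) * s ^ k / w ^ (Suc n + k))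
      = - (\<Sum>k\<le>n. - of_nat (n + k) * (of_real (?a n k) * s ^ k) / w ^ (n + k + 1))"
    unfolding sum.atMost_Suc sum_negf[symmetric]
    by (simp add: exp_recip_coeff_eq_0, intro sum.cong)
      (simp_all add: algebra_simps diff_divide_distrib add_divide_distrib)
  have "exp_recip_poly s (Suc n) w =
     (\<Sum>k\<le>Suc n. of_real (if k = 0 then 0 else ?a n (k - 1)) * s ^ k / w ^ (Suc n + k))
     - (\<Sum>k\<le>Suc n. of_real (real (n + k) * ?a n k) * s ^ k / w ^ (Suc n + k))"
    unfolding exp_recip_poly_def sum_subtractf[symmetric]
    by (intro sum.cong refl)
      (simp only: exp_recip_coeff.simps of_real_diff left_diff_distrib diff_divide_distrib)
  then show ?thesis unfolding shifted scaled by simp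
qed

lemma has_field_derivative_one_minus_exp_recip_deriv:
  fixes s w :: complex
  assumes "w \<noteq> 0"
  shows "(one_minus_exp_recip_deriv s n has_field_derivative one_minus_exp_recip_deriv s (Suc n) w) (at w)"
proof -
  define P' where
    "P' = (\<Sum>k\<le>n. - of_nat (n + k) * (of_real (exp_recip_coeff n k) * s ^ k) / w ^ (n + k + 1))"
  have "(exp_recip_poly s n has_field_derivative P') (at w)"
    unfolding exp_recip_poly_def[abs_def] P'_def
    by (intro DERIV_sum has_field_derivative_divide_power assms)
  moreover have "((\<lambda>w. exp (- s / w)) has_field_derivative exp (- s / w) * (s / w^2)) (at w)"
    by (rule derivative_eq_intros refl | simp add: assms power2_eq_square)+
  ultimately have "((\<lambda>w. (if n = 0 then 1 else 0) - exp (- s / w) * exp_recip_poly s n w)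
      has_field_derivative 0 - (exp (- s / w) * (s / w^2) * exp_recip_poly s n w
        + P' * exp (- s / w))) (at w)"
    by (intro DERIV_diff DERIV_mult DERIV_const)
  then show ?thesis
    unfolding one_minus_exp_recip_deriv_def[abs_def] exp_recip_poly_Suc[OF assms]
    by (simp add: P'_def algebra_simps)
qed

lemma nth_vderiv_eq_on_open:
  assumes "open S" "x \<in> S" "\<And>y. y \<in> S \<Longrightarrow> f y = h 0 y"
    and "\<And>n y. y \<in> S \<Longrightarrow> (h n has_vector_derivative h (Suc n) y) (at y)"
  shows "nth_vderiv n f x = h n x"
  using assms(2)
proof (induction n arbitrary: x)
  case 0
  then show ?case unfolding nth_vderiv_def funpow_0 by (rule assms(3))
next
  case (Suc n)
  have "(nth_vderiv n f has_vector_derivative h (Suc n) x) (at x)"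
    by (rule has_vector_derivative_transform_within_open[OF assms(4) assms(1)])
      (use Suc in auto)
  then have "vector_derivative (nth_vderiv n f) (at x) = h (Suc n) x"
    by (rule vector_derivative_at)
  then show ?case by (simp add: nth_vderiv_def)
qed

lemma power_div_power_le:
  fixes a u :: real
  assumes "u > 0" "a \<ge> u" "k \<le> n"
  shows "a ^ k / u ^ (n + k) \<le> a ^ n / u ^ (2 * n)"
proof -
  have "a ^ k * u ^ (n - k) \<le> a ^ k * a ^ (n - k)"
    using assms by (intro mult_left_mono power_mono) auto
  also have "\<dots> = a ^ n" using assms(3) by (simp add: power_add[symmetric])
  finally have "a ^ k * u ^ (n - k) / u ^ (2 * n) \<le> a ^ n / u ^ (2 * n)"
    using assms(1) by (intro divide_right_mono) auto
  moreover have "u ^ (2 * n) = u ^ (n + k) * u ^ (n - k)"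
    using assms(3) by (simp add: power_add[symmetric] mult_2)
  ultimately show ?thesis using assms(1) by simp
qed

lemma norm_exp_recip_poly_le:
  fixes s :: complex and u :: real
  assumes "u > 0" "norm s \<ge> u"
  shows "norm (exp_recip_poly s n (of_real u))
    \<le> (\<Sum>k\<le>n. \<bar>exp_recip_coeff n k\<bar>) * (norm s ^ n / u ^ (2 * n))"
  unfolding exp_recip_poly_def sum_distrib_right
proof (rule order_trans[OF norm_sum], rule sum_mono)
  fix k assume "k \<in> {..n}"
  have "norm (of_real (exp_recip_coeff n k) * s ^ k / of_real u ^ (n + k))
      = \<bar>exp_recip_coeff n k\<bar> * (norm s ^ k / u ^ (n + k))"
    using assms by (simp add: norm_divide norm_mult norm_power)
  also have "\<dots> \<le> \<bar>exp_recip_coeff n k\<bar> * (norm s ^ n / u ^ (2 * n))"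
    using power_div_power_le[of u "norm s" k n] assms \<open>k \<in> {..n}\<close>
    by (intro mult_left_mono) auto
  finally show "norm (of_real (exp_recip_coeff n k) * s ^ k / of_real u ^ (n + k))
      \<le> \<bar>exp_recip_coeff n k\<bar> * (norm s ^ n / u ^ (2 * n))" .
qed

lemma norm_one_minus_exp_recip_deriv_le:
  fixes s :: complex and u :: real
  assumes "Re s = 1" "u > 0" "norm s \<ge> u"
  shows "norm (one_minus_exp_recip_deriv s n (of_real u))
    \<le> (2 + (\<Sum>k\<le>n. \<bar>exp_recip_coeff n k\<bar>)) * norm s ^ n / u ^ (2 * n)"
proof -
  have exp_le_1: "norm (exp (- s / of_real u)) \<le> 1"
    using assms by (simp add: norm_exp_eq_Re Re_divide_of_real)
  show ?thesis
  proof (cases "n = 0")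
    case True
    have "norm (1 - exp (- s / of_real u)) \<le> 2"
      using norm_triangle_ineq4[of 1 "exp (- s / of_real u)", unfolded norm_one] exp_le_1 by linarith
    then show ?thesis
      using True by (simp add: one_minus_exp_recip_deriv_def exp_recip_poly_def)
  next
    case False
    have "norm (one_minus_exp_recip_deriv s n (of_real u))
        = norm (exp (- s / of_real u)) * norm (exp_recip_poly s n (of_real u))"
      using False by (simp add: one_minus_exp_recip_deriv_def norm_mult)
    also have "\<dots> \<le> 1 * ((\<Sum>k\<le>n. \<bar>exp_recip_coeff n k\<bar>) * (norm s ^ n / u ^ (2 * n)))"
      by (rule mult_mono[OF exp_le_1 norm_exp_recip_poly_le[OF assms(2,3)]]) auto
    also have "\<dots> \<le> (2 + (\<Sum>k\<le>n. \<bar>exp_recip_coeff n k\<bar>)) * (norm s ^ n / u ^ (2 * n))"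
      unfolding mult_1_left using assms(2) by (intro mult_right_mono) auto
    finally show ?thesis by simp
  qed
qed

theorem lemma10:
  fixes \<nu> :: nat
  shows "\<exists>C::real. \<forall>(u::real) (s::complex).
           Re s = 1 \<longrightarrow> u \<ge> 1 \<longrightarrow> norm s > u \<longrightarrow>
           norm (nth_vderiv \<nu> (\<lambda>v. s * deriv (\<lambda>z. G v z) s) u)
             \<le> C * norm s ^ \<nu> / u ^ (2 * \<nu>)"
proof (intro exI allI impI)
  fix u :: real and s :: complex
  assume s: "Re s = 1" and u: "u \<ge> 1" "norm s > u"
  have "s \<noteq> 0" using s by auto
  then have "nth_vderiv \<nu> (\<lambda>v. s * deriv (\<lambda>z. G v z) s) u
      = one_minus_exp_recip_deriv s \<nu> (of_real u)"
    using u by (intro nth_vderiv_eq_on_open[where S="{0<..}"]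
        has_vector_derivative_real_field has_field_derivative_one_minus_exp_recip_deriv)
      (auto simp: deriv_G one_minus_exp_recip_deriv_def exp_recip_poly_def)
  then show "norm (nth_vderiv \<nu> (\<lambda>v. s * deriv (\<lambda>z. G v z) s) u)
      \<le> (2 + (\<Sum>k\<le>\<nu>. \<bar>exp_recip_coeff \<nu> k\<bar>)) * norm s ^ \<nu> / u ^ (2 * \<nu>)"
    using norm_one_minus_exp_recip_deriv_le[OF s] u by simp
qed

end
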